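(* For every integer $n\ge0$ and every non-decreasing sequence $\underline s=(s_1,\dots,s_u)\in S^u$, $$g_n^{(\underline s),\dagger}(w)=\prod_{i=1}^u g_{n_{u,i}}^{(s_i),\dagger}(w).$$
   Context: Fix a prime $p\ge7$ and $k_0\in\{2,\dots,p\}$. $\{n\}$ is the residue of $n$ mod $p-1$ in $\{0,\dots,p-2\}$. $\mathcal K=\{k\ge2:k\equiv k_0\pmod{p-1}\}$, $k_\bullet=(k-k_0)/(p-1)$. For $s\in\{0,\dots,p-2\}$: $a_s=\{k_0-2-2s\}$, $\delta_s=\lfloor\frac{s+\{a_s+s\}}{p-1}\rfloor$; if $a_s+s<p-1$, $t_1^{(s)}=s+\delta_s$, $t_2^{(s)}=a_s+s+\delta_s+2$; otherwise $t_1^{(s)}=\{a_s+s\}+\delta_s+1$, $t_2^{(s)}=s+\delta_s+1$. For $k\in\mathcal K$: $d_k^{ur,\dagger}(s)=\lfloor\frac{k_\bullet-t_1^{(s)}}{p+1}\rfloor+\lfloor\frac{k_\bullet-t_2^{(s)}}{p+1}\rfloor+2+\delta_s$. $S=\{\lceil\frac{k_0+1}{2}\rceil,\dots,\lfloor\frac{k_0+p-4}{2}\rfloor\}$. For a sequence $\underline s=(s_1,\dots,s_u)$ and $k\in\mathcal K$, put $D^{ur}=\sum_id_k^{ur,\dagger}(s_i)$, $D^{Iw}=u(2k_\bullet+2)$, $m_n^{(\underline s),\dagger}(k)=\min\{n-D^{ur},D^{Iw}-D^{ur}-n\}$ if $D^{ur}<n<D^{Iw}-D^{ur}$ and $0$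 otherwise, $w_k=\exp((k-2)p)-1$, $g_n^{(\underline s),\dagger}(w)=\prod_{k\in\mathcal K}(w-w_k)^{m_n^{(\underline s),\dagger}(k)}$ (for $u=1$ write $(s)$). For $n\ge0,u\ge1$, $q=\lfloor n/u\rfloor$: if $q$ even, $n_{u,i}=q$ for $i\le u(q+1)-n$ and $q+1$ otherwise; if $q$ odd, $n_{u,i}=q+1$ for $i\le n-uq$ and $q$ otherwise. *)

theory Defs
  imports "HOL-Computational_Algebra.Computational_Algebra" "HOL-Number_Theory.Number_Theory"
begin

definition resid :: "int \<Rightarrow> int \<Rightarrow> int" where
  "resid p n = n mod (p - 1)"

definition a_s :: "int \<Rightarrow> int \<Rightarrow> int \<Rightarrow> int" where
  "a_s p k0 s = resid p (k0 - 2 - 2 * s)"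

definition delta_s :: "int \<Rightarrow> int \<Rightarrow> int \<Rightarrow> int" where
  "delta_s p k0 s = \<lfloor>real_of_int (s + resid p (a_s p k0 s + s)) / real_of_int (p - 1)\<rfloor>"

definition t1 :: "int \<Rightarrow> int \<Rightarrow> int \<Rightarrow> int" where
  "t1 p k0 s = (if a_s p k0 s + s < p - 1 then s + delta_s p k0 s
                else resid p (a_s p k0 s + s) + delta_s p k0 s + 1)"

definition t2 :: "int \<Rightarrow> int \<Rightarrow> int \<Rightarrow> int" where
  "t2 p k0 s = (if a_s p k0 s + s < p - 1 then a_s p k0 s + s + delta_s p k0 s + 2
                else s + delta_s p k0 s + 1)"

definition Kset :: "int \<Rightarrow> int \<Rightarrow> int set" where
  "Kset p k0 = {k. k \<ge> 2 \<and> [k = k0] (mod (p - 1))}"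

definition kbul :: "int \<Rightarrow> int \<Rightarrow> int \<Rightarrow> int" where
  "kbul p k0 k = (k - k0) div (p - 1)"

definition d_ur :: "int \<Rightarrow> int \<Rightarrow> int \<Rightarrow> int \<Rightarrow> int" where
  "d_ur p k0 s k =
     \<lfloor>real_of_int (kbul p k0 k - t1 p k0 s) / real_of_int (p + 1)\<rfloor>
   + \<lfloor>real_of_int (kbul p k0 k - t2 p k0 s) / real_of_int (p + 1)\<rfloor>
   + 2 + delta_s p k0 s"

definition Sset :: "int \<Rightarrow> int \<Rightarrow> int set" where
  "Sset p k0 = {\<lceil>real_of_int (k0 + 1) / 2\<rceil> .. \<lfloor>real_of_int (k0 + p - 4) / 2\<rfloor>}"

definition D_ur :: "int \<Rightarrow> int \<Rightarrow> int list \<Rightarrow> int \<Rightarrow> int" where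
  "D_ur p k0 ss k = (\<Sum>i<length ss. d_ur p k0 (ss ! i) k)"

definition D_Iw :: "int \<Rightarrow> int \<Rightarrow> int list \<Rightarrow> int \<Rightarrow> int" where
  "D_Iw p k0 ss k = int (length ss) * (2 * kbul p k0 k + 2)"

definition m_dag :: "int \<Rightarrow> int \<Rightarrow> int list \<Rightarrow> nat \<Rightarrow> int \<Rightarrow> int" where
  "m_dag p k0 ss n k =
     (if D_ur p k0 ss k < int n \<and> int n < D_Iw p k0 ss k - D_ur p k0 ss k
      then min (int n - D_ur p k0 ss k) (D_Iw p k0 ss k - D_ur p k0 ss k - int n)
      else 0)"

text \<open>g_n^{(s)}(w) = prod over k in K of (w - w_k)^m; only the (finitely many) k with
  nonzero exponent contribute a factor different from 1.  The weights w_k are a parameter wk.\<close>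
definition g_dag :: "(int \<Rightarrow> 'a::comm_ring_1) \<Rightarrow> int \<Rightarrow> int \<Rightarrow> nat \<Rightarrow> int list \<Rightarrow> 'a poly" where
  "g_dag wk p k0 n ss =
     (\<Prod>k\<in>{k \<in> Kset p k0. m_dag p k0 ss n k \<noteq> 0}. [:- wk k, 1:] ^ nat (m_dag p k0 ss n k))"

text \<open>n_{u,i}, with i 1-indexed\<close>
definition n_ui :: "nat \<Rightarrow> nat \<Rightarrow> nat \<Rightarrow> nat" where
  "n_ui n u i = (let q = n div u in
     if even q then (if i \<le> u * (q + 1) - n then q else q + 1)
     else (if i \<le> n - u * q then q + 1 else q))"

end

theory Submission
  imports Defs
begin

text \<open>With c = kbul k + 1, the exponent m_dag of a sequence of length u at k is the positive part
  of u c - D_ur - |n - u c|.  The n_ui sum to n and all lie on the same side of c, so the numbers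
  x_i = c - d_ur(s_i) - |n_ui(i) - c| add up to the argument of that positive part.  On S the
  degree d_ur(s) has a closed form that changes by at most one as s grows and never leaves an
  odd value; together with the parity pattern of the n_ui this prevents two x_i from having
  opposite strict signs, so the positive part of the sum is the sum of the positive parts.
  Additivity of the exponents is the claimed factorisation.\<close>

lemma mem_Sset_iff: "s \<in> Sset p k0 \<longleftrightarrow> k0 + 1 \<le> 2 * s \<and> 2 * s \<le> k0 + p - 4"
proof -
  have "s \<in> Sset p k0 \<longleftrightarrow> real_of_int (k0 + 1) / 2 \<le> s \<and> s \<le> real_of_int (k0 + p - 4) / 2"
    unfolding Sset_def by (simp add: ceiling_le_iff le_floor_iff)
  also have "\<dots> \<longleftrightarrow> real_of_int (k0 + 1) \<le> real_of_int (2 * s) \<and> real_of_int (2 * s) \<le> real_of_int (k0 + p - 4)"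
    by (simp add: field_simps)
  also have "\<dots> \<longleftrightarrow> k0 + 1 \<le> 2 * s \<and> 2 * s \<le> k0 + p - 4"
    by (simp only: of_int_le_iff)
  finally show ?thesis .
qed

lemma a_s_on_Sset:
  assumes "s \<in> Sset p k0" "2 \<le> k0" "k0 \<le> p"
  shows "a_s p k0 s = k0 - 2 - 2 * s + (p - 1)"
proof -
  have "(k0 - 2 - 2 * s) mod (p - 1) = (k0 - 2 - 2 * s + (p - 1)) mod (p - 1)"
    by (simp only: mod_add_self2)
  also have "\<dots> = k0 - 2 - 2 * s + (p - 1)"
    using assms by (intro mod_pos_pos_trivial) (auto simp: mem_Sset_iff)
  finally show ?thesis
    by (simp add: a_s_def resid_def)
qed

lemma delta_t1_t2_on_Sset:
  assumes "s \<in> Sset p k0" "2 \<le> k0" "k0 \<le> p" "7 \<le> p"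
  shows "delta_s p k0 s = (if k0 - 1 \<le> s then 1 else 0)"
    and "t1 p k0 s = (if k0 - 1 \<le> s then s + 1 else k0 - 1 - s)"
    and "t2 p k0 s = (if k0 - 1 \<le> s then k0 + p - s else s + 1)"
proof -
  from assms(1) have s: "k0 + 1 \<le> 2 * s" "2 * s \<le> k0 + p - 4"
    by (simp_all add: mem_Sset_iff)
  note a = a_s_on_Sset[OF assms(1-3)]
  consider "k0 - 1 \<le> s" | "s < k0 - 1"
    by linarith
  then have "delta_s p k0 s = (if k0 - 1 \<le> s then 1 else 0) \<and>
    t1 p k0 s = (if k0 - 1 \<le> s then s + 1 else k0 - 1 - s) \<and>
    t2 p k0 s = (if k0 - 1 \<le> s then k0 + p - s else s + 1)"
  proof cases
    case 1
    have r: "resid p (a_s p k0 s + s) = a_s p k0 s + s"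
      unfolding resid_def a using s assms 1 by (intro mod_pos_pos_trivial) auto
    have "delta_s p k0 s = (k0 - 2 + (p - 1)) div (p - 1)"
      unfolding delta_s_def floor_divide_of_int_eq r unfolding a by (simp add: algebra_simps)
    also have "\<dots> = (k0 - 2) div (p - 1) + 1"
      using assms by (intro div_add_self2) simp
    also have "\<dots> = 1"
      using assms by simp
    finally show ?thesis
      unfolding t1_def t2_def a using 1 by auto
  next
    case 2
    have "(a_s p k0 s + s) mod (p - 1) = (k0 - 2 - s + (p - 1)) mod (p - 1)"
      unfolding a by (simp add: algebra_simps)
    also have "\<dots> = (k0 - 2 - s) mod (p - 1)"
      by (simp only: mod_add_self2)
    also have "\<dots> = k0 - 2 - s"
      using s assms 2 by (intro mod_pos_pos_trivial) auto
    finally have r: "resid p (a_s p k0 s + s) = k0 - 2 - s"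
      by (simp add: resid_def)
    have "delta_s p k0 s = 0"
      unfolding delta_s_def floor_divide_of_int_eq r using s assms 2 by simp
    then show ?thesis
      unfolding t1_def t2_def r unfolding a using 2 by auto
  qed
  then show "delta_s p k0 s = (if k0 - 1 \<le> s then 1 else 0)"
    and "t1 p k0 s = (if k0 - 1 \<le> s then s + 1 else k0 - 1 - s)"
    and "t2 p k0 s = (if k0 - 1 \<le> s then k0 + p - s else s + 1)"
    by simp_all
qed

definition d_ur_on_S :: "int \<Rightarrow> int \<Rightarrow> int \<Rightarrow> int \<Rightarrow> int" where
  "d_ur_on_S P k0 kb s = (kb - s - 1) div P + (kb + s + 1 - k0) div P + 2"

lemma d_ur_eq_d_ur_on_S:
  assumes "s \<in> Sset p k0" "2 \<le> k0" "k0 \<le> p" "7 \<le> p"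
  shows "d_ur p k0 s k = d_ur_on_S (p + 1) k0 (kbul p k0 k) s"
proof (cases "k0 - 1 \<le> s")
  case True
  define kb where "kb = kbul p k0 k"
  have "(kb + s + 1 - k0) div (p + 1) = (kb - (k0 + p - s) + (p + 1)) div (p + 1)"
    by (simp add: algebra_simps)
  also have "\<dots> = (kb - (k0 + p - s)) div (p + 1) + 1"
    using assms by (intro div_add_self2) simp
  finally show ?thesis
    using True unfolding d_ur_def d_ur_on_S_def floor_divide_of_int_eq
      delta_t1_t2_on_Sset[OF assms] kb_def[symmetric]
    by (simp add: diff_diff_eq[symmetric])
next
  case False
  then show ?thesis
    unfolding d_ur_def d_ur_on_S_def floor_divide_of_int_eq delta_t1_t2_on_Sset[OF assms]
    by (simp add: algebra_simps)
qed

lemma mem_Kset_kbul: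
  assumes "k \<in> Kset p k0" "2 \<le> p" "k0 \<le> p"
  shows "k = k0 + (p - 1) * kbul p k0 k" and "0 \<le> kbul p k0 k"
proof -
  from assms(1) have k: "2 \<le> k" "(p - 1) dvd (k - k0)"
    by (simp_all add: Kset_def cong_iff_dvd_diff)
  then obtain t where t: "k - k0 = (p - 1) * t"
    by (elim dvdE)
  have kb: "kbul p k0 k = t"
    unfolding kbul_def t using assms by simp
  show "k = k0 + (p - 1) * kbul p k0 k"
    using t kb by simp
  have "\<not> t \<le> -1"
  proof
    assume "t \<le> -1"
    then have "(p - 1) * t \<le> (p - 1) * (-1)"
      using assms by (intro mult_left_mono) auto
    then show False
      using t k assms by simp
  qed
  then show "0 \<le> kbul p k0 k"
    using kb by simp
qed

lemma kbul_div_le_d_ur: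
  assumes "k \<in> Kset p k0" "s \<in> Sset p k0" "2 \<le> k0" "k0 \<le> p" "7 \<le> p"
  shows "kbul p k0 k div (p + 1) \<le> d_ur p k0 s k"
proof -
  define kb where "kb = kbul p k0 k"
  have kb: "0 \<le> kb"
    using mem_Kset_kbul(2)[OF assms(1)] assms by (simp add: kb_def)
  from assms(2) have s: "k0 + 1 \<le> 2 * s" "2 * s \<le> k0 + p - 4"
    by (simp_all add: mem_Sset_iff)
  have "(kb + (-1) * (p + 1)) div (p + 1) \<le> (kb - s - 1) div (p + 1)"
    using s assms by (intro zdiv_mono1) auto
  moreover have "(kb + (-1) * (p + 1)) div (p + 1) = kb div (p + 1) - 1"
    using assms by (subst div_mult_self1) auto
  moreover have "(-1 * (p + 1)) div (p + 1) \<le> (kb + s + 1 - k0) div (p + 1)"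
    using s kb assms by (intro zdiv_mono1) auto
  moreover have "(-1 * (p + 1)) div (p + 1) = -1"
    using assms by (subst nonzero_mult_div_cancel_right) auto
  ultimately show ?thesis
    using d_ur_eq_d_ur_on_S[OF assms(2-5)] by (simp add: d_ur_on_S_def kb_def)
qed

lemma d_ur_less_if_m_dag_single_nonzero:
  "m_dag p k0 [s] N k \<noteq> 0 \<Longrightarrow> d_ur p k0 s k < int N"
  by (auto simp: m_dag_def D_ur_def split: if_splits)

lemma finite_support_m_dag_single:
  assumes "s \<in> Sset p k0" "2 \<le> k0" "k0 \<le> p" "7 \<le> p"
  shows "finite {k \<in> Kset p k0. m_dag p k0 [s] N k \<noteq> 0}"
proof (rule finite_subset)
  show "finite ((\<lambda>t. k0 + (p - 1) * t) ` {0..<(p + 1) * int N})"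
    by simp
  show "{k \<in> Kset p k0. m_dag p k0 [s] N k \<noteq> 0} \<subseteq> (\<lambda>t. k0 + (p - 1) * t) ` {0..<(p + 1) * int N}"
  proof
    fix k assume k: "k \<in> {k \<in> Kset p k0. m_dag p k0 [s] N k \<noteq> 0}"
    define kb where "kb = kbul p k0 k"
    have "kb div (p + 1) < int N"
      using kbul_div_le_d_ur[of k p k0 s] d_ur_less_if_m_dag_single_nonzero[of p k0 s N k] k assms
      by (simp add: kb_def)
    then have "(p + 1) * (kb div (p + 1) + 1) \<le> (p + 1) * int N"
      using assms by (intro mult_left_mono) auto
    moreover have "kb = (p + 1) * (kb div (p + 1)) + kb mod (p + 1)"
      by simp
    moreover have "kb mod (p + 1) < p + 1"
      using assms by (intro pos_mod_bound) simp
    moreover have "(p + 1) * (kb div (p + 1) + 1) = (p + 1) * (kb div (p + 1)) + (p + 1)"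
      by (simp add: distrib_left)
    ultimately have "kb < (p + 1) * int N"
      by linarith
    then show "k \<in> (\<lambda>t. k0 + (p - 1) * t) ` {0..<(p + 1) * int N}"
      using mem_Kset_kbul[of k p k0] k assms by (auto simp: kb_def)
  qed
qed

lemma m_dag_eq_tent:
  "m_dag p k0 ss n k = max 0 (int (length ss) * (kbul p k0 k + 1) - D_ur p k0 ss k
     - \<bar>int n - int (length ss) * (kbul p k0 k + 1)\<bar>)"
  unfolding m_dag_def D_Iw_def by (auto simp: algebra_simps abs_if)

lemma n_ui_cases: "n_ui n u i = n div u \<or> n_ui n u i = n div u + 1"
  by (auto simp: n_ui_def Let_def)

text \<open>The order in which n_ui lists the values q and q + 1 depends on the parity of q exactly so
  that the earlier entry of any unequal pair is even.\<close>

lemma n_ui_pair: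
  "i < j \<Longrightarrow> n_ui n u i = n_ui n u j \<or>
     even (n_ui n u i) \<and> \<bar>int (n_ui n u i) - int (n_ui n u j)\<bar> = 1"
  by (auto simp: n_ui_def Let_def)

lemma n_ui_one_side: "(\<forall>i. c \<le> int (n_ui n u i)) \<or> (\<forall>i. int (n_ui n u i) \<le> c)"
proof -
  have "int (n div u) \<le> int (n_ui n u i)" "int (n_ui n u i) \<le> int (n div u) + 1" for i
    using n_ui_cases[of n u i] by auto
  then show ?thesis
    by (cases "c \<le> int (n div u)") (meson order_trans, smt (verit))
qed

lemma sum_lessThan_if_less:
  assumes "m \<le> u"
  shows "(\<Sum>i<u. if i < m then a else b) = m * a + (u - m) * (b :: nat)"
proof -
  have "{..<u} = {..<m} \<union> {m..<u}"
    using assms by auto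
  then have "(\<Sum>i<u. if i < m then a else b) = (\<Sum>i\<in>{..<m} \<union> {m..<u}. if i < m then a else b)"
    by simp
  also have "\<dots> = (\<Sum>i<m. if i < m then a else b) + (\<Sum>i=m..<u. if i < m then a else b)"
    by (rule sum.union_disjoint) auto
  also have "\<dots> = (\<Sum>i<m. a) + (\<Sum>i=m..<u. b)"
    by (intro arg_cong2[where f = "(+)"] sum.cong) auto
  finally show ?thesis by simp
qed

lemma sum_n_ui:
  assumes "0 < u"
  shows "(\<Sum>i<u. n_ui n u (i + 1)) = n"
proof -
  define q r where "q = n div u" and "r = n mod u"
  have n: "n = u * q + r" and r: "r < u"
    using assms by (simp_all add: q_def r_def)
  show ?thesis
  proof (cases "even q")
    case True
    have "u * (q + 1) - n = u - r"
      using n r by (simp add: algebra_simps)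
    then have "(\<Sum>i<u. n_ui n u (i + 1)) = (\<Sum>i<u. if i < u - r then q else q + 1)"
      unfolding n_ui_def Let_def q_def[symmetric] using True by (intro sum.cong) auto
    also have "\<dots> = (u - r) * q + r * (q + 1)"
      using r by (simp add: sum_lessThan_if_less)
    finally show ?thesis
      using n r by (simp add: algebra_simps diff_mult_distrib)
  next
    case False
    have "n - u * q = r"
      using n by simp
    then have "(\<Sum>i<u. n_ui n u (i + 1)) = (\<Sum>i<u. if i < r then q + 1 else q)"
      unfolding n_ui_def Let_def q_def[symmetric] using False by (intro sum.cong) auto
    also have "\<dots> = r * (q + 1) + (u - r) * q"
      using r by (simp add: sum_lessThan_if_less)
    finally show ?thesis
      using n r by (simp add: algebra_simps diff_mult_distrib)
  qed
qed

lemma div_le_div_le_plus_1: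
  fixes x y P :: int
  assumes "0 < P" "x \<le> y" "y - x < P"
  shows "x div P \<le> y div P" and "y div P \<le> x div P + 1"
proof -
  show "x div P \<le> y div P"
    using assms by (intro zdiv_mono1) auto
  have "y div P \<le> (x + P) div P"
    using assms by (intro zdiv_mono1) auto
  then show "y div P \<le> x div P + 1"
    using assms by simp
qed

text \<open>The two quotients A and B in d_ur_on_S satisfy A \<le> B \<le> A + 1, so d_ur_on_S is odd
  exactly when B = A + 1; increasing s lowers A and raises B by at most one each.\<close>

lemma d_ur_on_S_mono_step:
  assumes "0 < P" "s \<le> t" "k0 \<le> 2 * s + 2" "2 * t + 2 - k0 < P"
  shows "\<bar>d_ur_on_S P k0 kb t - d_ur_on_S P k0 kb s\<bar> \<le> 1"
    and "odd (d_ur_on_S P k0 kb s) \<Longrightarrow> d_ur_on_S P k0 kb t = d_ur_on_S P k0 kb s"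
proof -
  define As At Bs Bt
    where "As = (kb - s - 1) div P" and "At = (kb - t - 1) div P"
      and "Bs = (kb + s + 1 - k0) div P" and "Bt = (kb + t + 1 - k0) div P"
  have A: "At \<le> As" "As \<le> At + 1"
    unfolding As_def At_def using assms by (intro div_le_div_le_plus_1; simp)+
  have B: "Bs \<le> Bt" "Bt \<le> Bs + 1"
    unfolding Bs_def Bt_def using assms by (intro div_le_div_le_plus_1; simp)+
  have ABs: "As \<le> Bs" "Bs \<le> As + 1"
    unfolding As_def Bs_def using assms by (intro div_le_div_le_plus_1; simp)+
  have ABt: "At \<le> Bt" "Bt \<le> At + 1"
    unfolding At_def Bt_def using assms by (intro div_le_div_le_plus_1; simp)+
  have d: "d_ur_on_S P k0 kb s = As + Bs + 2" "d_ur_on_S P k0 kb t = At + Bt + 2"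
    by (simp_all add: d_ur_on_S_def As_def At_def Bs_def Bt_def)
  show "\<bar>d_ur_on_S P k0 kb t - d_ur_on_S P k0 kb s\<bar> \<le> 1"
    unfolding d using A B by linarith
  assume "odd (d_ur_on_S P k0 kb s)"
  then have "Bs \<noteq> As"
    unfolding d by auto
  then show "d_ur_on_S P k0 kb t = d_ur_on_S P k0 kb s"
    unfolding d using A B ABs ABt by linarith
qed

lemma d_ur_step_on_Sset:
  assumes "s \<in> Sset p k0" "t \<in> Sset p k0" "s \<le> t" "2 \<le> k0" "k0 \<le> p" "7 \<le> p"
  shows "\<bar>d_ur p k0 t k - d_ur p k0 s k\<bar> \<le> 1"
    and "odd (d_ur p k0 s k) \<Longrightarrow> d_ur p k0 t k = d_ur p k0 s k"
proof -
  have "0 < p + 1" "k0 \<le> 2 * s + 2" "2 * t + 2 - k0 < p + 1"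
    using assms by (auto simp: mem_Sset_iff)
  from d_ur_on_S_mono_step[OF this(1) assms(3) this(2,3)]
  show "\<bar>d_ur p k0 t k - d_ur p k0 s k\<bar> \<le> 1"
    and "odd (d_ur p k0 s k) \<Longrightarrow> d_ur p k0 t k = d_ur p k0 s k"
    unfolding d_ur_eq_d_ur_on_S[OF assms(1,4-6)] d_ur_eq_d_ur_on_S[OF assms(2,4-6)] by blast+
qed

text \<open>The two tent values differ by at most 2, and by 2 only if the first one is even.\<close>

lemma tent_no_opposite_signs:
  fixes c d d' N N' :: int
  assumes d: "\<bar>d' - d\<bar> \<le> 1" "odd d \<Longrightarrow> d' = d"
    and N: "N = N' \<or> even N \<and> \<bar>N - N'\<bar> = 1"
  shows "\<not> (0 < c - d - \<bar>N - c\<bar> \<and> c - d' - \<bar>N' - c\<bar> < 0)"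
    and "\<not> (c - d - \<bar>N - c\<bar> < 0 \<and> 0 < c - d' - \<bar>N' - c\<bar>)"
proof -
  define x x' where "x = c - d - \<bar>N - c\<bar>" and "x' = c - d' - \<bar>N' - c\<bar>"
  have "\<bar>x - x'\<bar> \<le> 1 \<or> even x \<and> \<bar>x - x'\<bar> \<le> 2"
  proof (cases "d = d' \<or> N = N'")
    case True
    then show ?thesis
      using d N unfolding x_def x'_def by (auto simp: abs_if)
  next
    case False
    then have "even d" "even N"
      using d N by auto
    then have "even x"
      unfolding x_def by (auto simp: abs_if)
    then show ?thesis
      using d N unfolding x_def x'_def by (auto simp: abs_if split: if_splits)
  qed
  then show "\<not> (0 < x \<and> x' < 0)" and "\<not> (x < 0 \<and> 0 < x')"
    by (auto elim!: evenE)
qed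

lemma sum_max_0_eq_max_0_sum:
  fixes x :: "'i \<Rightarrow> 'a::linordered_ab_group_add"
  assumes "\<And>i j. i \<in> I \<Longrightarrow> j \<in> I \<Longrightarrow> \<not> (0 < x i \<and> x j < 0)"
  shows "(\<Sum>i\<in>I. max 0 (x i)) = max 0 (\<Sum>i\<in>I. x i)"
proof (cases "\<exists>i\<in>I. 0 < x i")
  case True
  then have "\<forall>j\<in>I. 0 \<le> x j"
    using assms by force
  then show ?thesis
    by (simp add: sum_nonneg)
next
  case False
  then have "\<forall>j\<in>I. x j \<le> 0"
    by force
  then show ?thesis
    by (simp add: sum_nonpos)
qed

lemma sum_abs_diff_one_side:
  fixes f :: "'i \<Rightarrow> 'a::linordered_idom"
  assumes "(\<forall>i\<in>I. c \<le> f i) \<or> (\<forall>i\<in>I. f i \<le> c)"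
  shows "(\<Sum>i\<in>I. \<bar>f i - c\<bar>) = \<bar>(\<Sum>i\<in>I. f i) - of_nat (card I) * c\<bar>"
  using assms
proof
  assume "\<forall>i\<in>I. c \<le> f i"
  then have "(\<Sum>i\<in>I. \<bar>f i - c\<bar>) = (\<Sum>i\<in>I. f i - c)" "0 \<le> (\<Sum>i\<in>I. f i - c)"
    by (auto intro: sum_nonneg)
  then show ?thesis
    by (simp add: sum_subtractf)
next
  assume "\<forall>i\<in>I. f i \<le> c"
  then have "(\<Sum>i\<in>I. \<bar>f i - c\<bar>) = (\<Sum>i\<in>I. c - f i)" "0 \<le> (\<Sum>i\<in>I. c - f i)"
    by (auto intro: sum_nonneg)
  then show ?thesis
    by (simp add: sum_subtractf)
qed

lemma m_dag_eq_sum_m_dag_single: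
  assumes "7 \<le> p" "2 \<le> k0" "k0 \<le> p"
    and "ss \<noteq> []" "sorted ss" "set ss \<subseteq> Sset p k0"
  shows "m_dag p k0 ss n k = (\<Sum>i<length ss. m_dag p k0 [ss ! i] (n_ui n (length ss) (i + 1)) k)"
proof -
  define u c where "u = length ss" and "c = kbul p k0 k + 1"
  define N d x
    where "N i = int (n_ui n u (i + 1))" and "d i = d_ur p k0 (ss ! i) k"
      and "x i = c - d i - \<bar>N i - c\<bar>" for i
  have S: "ss ! i \<in> Sset p k0" if "i < u" for i
    using that assms(6) by (auto simp: u_def)
  have single: "m_dag p k0 [ss ! i] (n_ui n u (i + 1)) k = max 0 (x i)" for i
    unfolding m_dag_eq_tent x_def N_def d_def c_def by (simp add: D_ur_def)
  have "(\<forall>i\<in>{..<u}. c \<le> N i) \<or> (\<forall>i\<in>{..<u}. N i \<le> c)"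
    using n_ui_one_side[of c n u] unfolding N_def by blast
  from sum_abs_diff_one_side[OF this]
  have "(\<Sum>i<u. \<bar>N i - c\<bar>) = \<bar>(\<Sum>i<u. N i) - int u * c\<bar>"
    by simp
  also have "(\<Sum>i<u. N i) = int n"
    using sum_n_ui[of u n] assms(4) unfolding N_def u_def by (simp flip: of_nat_sum)
  finally have "(\<Sum>i<u. x i) = int u * c - (\<Sum>i<u. d i) - \<bar>int n - int u * c\<bar>"
    unfolding x_def by (simp add: sum_subtractf)
  then have total: "m_dag p k0 ss n k = max 0 (\<Sum>i<u. x i)"
    unfolding m_dag_eq_tent D_ur_def d_def c_def u_def by simp
  have ordered: "\<not> (0 < x i \<and> x j < 0) \<and> \<not> (x i < 0 \<and> 0 < x j)" if "i < j" "j < u" for i j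
  proof -
    have "ss ! i \<le> ss ! j"
      using assms(5) that by (intro sorted_nth_mono) (auto simp: u_def)
    from d_ur_step_on_Sset[OF S S this assms(2,3,1)] that
    have "\<bar>d j - d i\<bar> \<le> 1" "odd (d i) \<Longrightarrow> d j = d i"
      unfolding d_def by simp_all
    moreover have "N i = N j \<or> even (N i) \<and> \<bar>N i - N j\<bar> = 1"
      using n_ui_pair[of "i + 1" "j + 1" n u] that by (auto simp: N_def)
    ultimately show ?thesis
      unfolding x_def by (intro conjI tent_no_opposite_signs)
  qed
  have "\<not> (0 < x i \<and> x j < 0)" if "i \<in> {..<u}" "j \<in> {..<u}" for i j
    using ordered[of i j] ordered[of j i] that by (cases i j rule: linorder_cases) auto
  then have "(\<Sum>i<u. max 0 (x i)) = max 0 (\<Sum>i<u. x i)"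
    by (rule sum_max_0_eq_max_0_sum)
  then show ?thesis
    unfolding total single u_def[symmetric] by simp
qed

lemma prod_support_power_sum:
  fixes X :: "'k \<Rightarrow> 'a::comm_monoid_mult" and m :: "'k \<Rightarrow> int" and ms :: "'i \<Rightarrow> 'k \<Rightarrow> int"
  assumes I: "finite I" and m: "\<And>k. k \<in> K \<Longrightarrow> m k = (\<Sum>i\<in>I. ms i k)"
    and nonneg: "\<And>i k. i \<in> I \<Longrightarrow> 0 \<le> ms i k"
    and fin: "\<And>i. i \<in> I \<Longrightarrow> finite {k \<in> K. ms i k \<noteq> 0}"
  shows "(\<Prod>k\<in>{k \<in> K. m k \<noteq> 0}. X k ^ nat (m k))
    = (\<Prod>i\<in>I. \<Prod>k\<in>{k \<in> K. ms i k \<noteq> 0}. X k ^ nat (ms i k))"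
proof -
  define F where "F = {k \<in> K. m k \<noteq> 0}"
  have F: "F = (\<Union>i\<in>I. {k \<in> K. ms i k \<noteq> 0})"
    unfolding F_def using m nonneg by (auto simp: sum_nonneg_eq_0_iff[OF I])
  then have "finite F"
    using I fin by auto
  have "(\<Prod>i\<in>I. \<Prod>k\<in>{k \<in> K. ms i k \<noteq> 0}. X k ^ nat (ms i k)) = (\<Prod>i\<in>I. \<Prod>k\<in>F. X k ^ nat (ms i k))"
    using \<open>finite F\<close> by (intro prod.cong refl prod.mono_neutral_left) (auto simp: F)
  also have "\<dots> = (\<Prod>k\<in>F. X k ^ (\<Sum>i\<in>I. nat (ms i k)))"
    by (subst prod.swap) (simp add: power_sum)
  also have "\<dots> = (\<Prod>k\<in>F. X k ^ nat (m k))"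
  proof (intro prod.cong refl arg_cong[where f = "\<lambda>e. X _ ^ e"])
    fix k assume "k \<in> F"
    then have "m k = int (\<Sum>i\<in>I. nat (ms i k))"
      using m nonneg by (simp add: F_def)
    then show "(\<Sum>i\<in>I. nat (ms i k)) = nat (m k)"
      by (simp only: nat_int)
  qed
  finally show ?thesis
    unfolding F_def ..
qed

theorem mainTheorem10:
  fixes p k0 :: int and n :: nat and ss :: "int list" and wk :: "int \<Rightarrow> 'a::comm_ring_1"
  assumes "prime p" and "p \<ge> 7" and "2 \<le> k0" and "k0 \<le> p"
    and "ss \<noteq> []" and "sorted ss" and "set ss \<subseteq> Sset p k0"
  shows "g_dag wk p k0 n ss =
           (\<Prod>i<length ss. g_dag wk p k0 (n_ui n (length ss) (i + 1)) [ss ! i])"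
  unfolding g_dag_def
proof (rule prod_support_power_sum)
  show "m_dag p k0 ss n k = (\<Sum>i<length ss. m_dag p k0 [ss ! i] (n_ui n (length ss) (i + 1)) k)"
    for k using assms by (intro m_dag_eq_sum_m_dag_single) auto
  show "0 \<le> m_dag p k0 [ss ! i] (n_ui n (length ss) (i + 1)) k" for i k
    by (simp add: m_dag_eq_tent)
  show "finite {k \<in> Kset p k0. m_dag p k0 [ss ! i] (n_ui n (length ss) (i + 1)) k \<noteq> 0}"
    if "i \<in> {..<length ss}" for i
    using that assms by (intro finite_support_m_dag_single) auto
qed simp

end
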